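(* Suppose a graph $G$ has $k$ connected components $C_1,\dots,C_k$, all of size $n_0$. Let $G_{C_1},\dots,G_{C_k}$ be the subgraphs on these components and $L^i$ their random walk Laplacians, and let $L_G$ be the random walk Laplacian of $G$. Then for any $s<n_0$, $\delta_s(L_G)=\max_i\delta_s(L^i)$.
   Context: Random walk Laplacian $L=I-D^{-1}A$ with $A$ adjacency matrix and $D$ degree matrix. The restricted isometry constant $\delta_s(\Phi)$ is the smallest $\delta\ge0$ with $(1-\delta)\|x\|_2^2\le\|\Phi_Tx\|_2^2\le(1+\delta)\|x\|_2^2$ for all index sets $T$ with $|T|\le s$ and all $x$, where $\Phi_T$ is the column submatrix indexed by $T$. *)

theory Defs
  imports Main "HOL-Library.Disjoint_Sets" Complex_Main
begin

definition graph :: "'v set \<Rightarrow> ('v \<Rightarrow> 'v \<Rightarrow> bool) \<Rightarrow> bool" where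
  "graph V E \<longleftrightarrow> finite V \<and> (\<forall>a b. E a b \<longrightarrow> a \<in> V \<and> b \<in> V)
     \<and> (\<forall>a b. E a b \<longrightarrow> E b a) \<and> (\<forall>a. \<not> E a a)"

definition reach :: "'v set \<Rightarrow> ('v \<Rightarrow> 'v \<Rightarrow> bool) \<Rightarrow> 'v \<Rightarrow> 'v \<Rightarrow> bool" where
  "reach V E = (\<lambda>a b. E a b \<and> a \<in> V \<and> b \<in> V)\<^sup>*\<^sup>*"

definition conn_components :: "'v set \<Rightarrow> ('v \<Rightarrow> 'v \<Rightarrow> bool) \<Rightarrow> 'v set set" where
  "conn_components V E = (\<lambda>v. {w \<in> V. reach V E v w}) ` V"

definition degree :: "'v set \<Rightarrow> ('v \<Rightarrow> 'v \<Rightarrow> bool) \<Rightarrow> 'v \<Rightarrow> nat" where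
  "degree V E v = card {w \<in> V. E v w}"

text \<open>Random walk Laplacian L = I - D^{-1} A of the subgraph induced on V,
as a matrix indexed by V x V (values outside V irrelevant).\<close>

definition adj :: "('v \<Rightarrow> 'v \<Rightarrow> bool) \<Rightarrow> 'v \<Rightarrow> 'v \<Rightarrow> real" where
  "adj E i j = (if E i j then 1 else 0)"

definition rw_laplacian :: "'v set \<Rightarrow> ('v \<Rightarrow> 'v \<Rightarrow> bool) \<Rightarrow> 'v \<Rightarrow> 'v \<Rightarrow> real" where
  "rw_laplacian V E i j =
     (if i = j then 1 else 0) - inverse (real (degree V E i)) * adj E i j"

definition rip_holds :: "'r set \<Rightarrow> 'c set \<Rightarrow> ('r \<Rightarrow> 'c \<Rightarrow> real) \<Rightarrow> nat \<Rightarrow> real \<Rightarrow> bool" where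
  "rip_holds R C Phi s \<delta> \<longleftrightarrow>
     (\<forall>T x. T \<subseteq> C \<and> card T \<le> s \<longrightarrow>
        (1 - \<delta>) * (\<Sum>j\<in>T. (x j)\<^sup>2) \<le> (\<Sum>i\<in>R. (\<Sum>j\<in>T. Phi i j * x j)\<^sup>2) \<and>
        (\<Sum>i\<in>R. (\<Sum>j\<in>T. Phi i j * x j)\<^sup>2) \<le> (1 + \<delta>) * (\<Sum>j\<in>T. (x j)\<^sup>2))"

definition rip_const :: "'r set \<Rightarrow> 'c set \<Rightarrow> ('r \<Rightarrow> 'c \<Rightarrow> real) \<Rightarrow> nat \<Rightarrow> real" where
  "rip_const R C Phi s = Inf {\<delta>. \<delta> \<ge> 0 \<and> rip_holds R C Phi s \<delta>}"

end

theory Submission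
  imports Defs "HOL-Analysis.Convex"
begin

text \<open>No edge joins two connected components, so the random walk Laplacian of G is block
diagonal with respect to the components, and on each component it agrees with the Laplacian
of the component (the degrees are the same). For a block diagonal matrix, both \<open>\<parallel>x\<parallel>\<^sup>2\<close> and
\<open>\<parallel>Phi\<^sub>T x\<parallel>\<^sup>2\<close> split into the contributions of the traces of T on the blocks, and these
traces are again of size at most s. Hence \<open>\<delta>\<close> satisfies the RIP inequalities for G iff it
satisfies them for every component, and the infimum of a finite intersection of up-closed
sets of reals is the largest of their infima.\<close>

lemma cInf_INTER_up_closed:
  fixes S :: "'i \<Rightarrow> real set"
  assumes "finite I" "I \<noteq> {}"
    and nonempty: "\<And>i. i \<in> I \<Longrightarrow> S i \<noteq> {}"
    and bounded: "\<And>i. i \<in> I \<Longrightarrow> bdd_below (S i)"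
    and up_closed: "\<And>i d d'. i \<in> I \<Longrightarrow> d \<in> S i \<Longrightarrow> d \<le> d' \<Longrightarrow> d' \<in> S i"
  shows "Inf (\<Inter>i\<in>I. S i) = Max ((\<lambda>i. Inf (S i)) ` I)"
proof -
  define M where "M = Max ((\<lambda>i. Inf (S i)) ` I)"
  have Inf_le_M: "Inf (S i) \<le> M" if "i \<in> I" for i
    unfolding M_def using assms(1) that by auto
  have M_plus: "M + e \<in> (\<Inter>i\<in>I. S i)" if "e > 0" for e
  proof
    fix i assume i: "i \<in> I"
    have "Inf (S i) < Inf (S i) + e" using \<open>e > 0\<close> by simp
    then obtain d where "d \<in> S i" "d < Inf (S i) + e"
      using cInf_less_iff[OF nonempty[OF i] bounded[OF i]] by blast
    then show "M + e \<in> S i"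
      using up_closed[OF i] Inf_le_M[OF i] by fastforce
  qed
  obtain i0 where i0: "i0 \<in> I" "Inf (S i0) = M"
    unfolding M_def using assms(1,2)
    by (metis (no_types, lifting) Max_in finite_imageI image_iff image_is_empty)
  have bounded_INTER: "bdd_below (\<Inter>i\<in>I. S i)"
    using bounded[OF i0(1)] by (rule bdd_below_mono) (use i0 in blast)
  have "M \<le> Inf (\<Inter>i\<in>I. S i)"
    unfolding i0(2)[symmetric] using M_plus[of 1] bounded[OF i0(1)] i0(1)
    by (intro cInf_superset_mono) auto
  moreover have "Inf (\<Inter>i\<in>I. S i) \<le> M + e" if "e > 0" for e
    using M_plus[OF that] bounded_INTER by (rule cInf_lower)
  ultimately show ?thesis
    unfolding M_def by (meson field_le_epsilon order_antisym)
qed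

subsection \<open>Restricted isometry property\<close>

lemma rip_holdsI:
  assumes "\<And>T x. T \<subseteq> C \<Longrightarrow> card T \<le> s \<Longrightarrow>
      (1 - d) * (\<Sum>j\<in>T. (x j)\<^sup>2) \<le> (\<Sum>i\<in>R. (\<Sum>j\<in>T. Phi i j * x j)\<^sup>2)"
    and "\<And>T x. T \<subseteq> C \<Longrightarrow> card T \<le> s \<Longrightarrow>
      (\<Sum>i\<in>R. (\<Sum>j\<in>T. Phi i j * x j)\<^sup>2) \<le> (1 + d) * (\<Sum>j\<in>T. (x j)\<^sup>2)"
  shows "rip_holds R C Phi s d"
  using assms unfolding rip_holds_def by blast

lemma rip_holdsD:
  assumes "rip_holds R C Phi s d" "T \<subseteq> C" "card T \<le> s"
  shows "(1 - d) * (\<Sum>j\<in>T. (x j)\<^sup>2) \<le> (\<Sum>i\<in>R. (\<Sum>j\<in>T. Phi i j * x j)\<^sup>2)"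
    and "(\<Sum>i\<in>R. (\<Sum>j\<in>T. Phi i j * x j)\<^sup>2) \<le> (1 + d) * (\<Sum>j\<in>T. (x j)\<^sup>2)"
  using assms unfolding rip_holds_def by blast+

lemma rip_holds_mono:
  fixes Phi :: "'r \<Rightarrow> 'c \<Rightarrow> real"
  assumes "rip_holds R C Phi s d" "d \<le> d'"
  shows "rip_holds R C Phi s d'"
proof (rule rip_holdsI)
  fix T and x :: "'c \<Rightarrow> real" assume T: "T \<subseteq> C" "card T \<le> s"
  have "(\<Sum>j\<in>T. (x j)\<^sup>2) \<ge> 0" by (simp add: sum_nonneg)
  then have "(1 - d') * (\<Sum>j\<in>T. (x j)\<^sup>2) \<le> (1 - d) * (\<Sum>j\<in>T. (x j)\<^sup>2)"
    and "(1 + d) * (\<Sum>j\<in>T. (x j)\<^sup>2) \<le> (1 + d') * (\<Sum>j\<in>T. (x j)\<^sup>2)"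
    using assms(2) by (simp_all add: mult_right_mono)
  with rip_holdsD[OF assms(1) T, where x = x]
  show "(1 - d') * (\<Sum>j\<in>T. (x j)\<^sup>2) \<le> (\<Sum>i\<in>R. (\<Sum>j\<in>T. Phi i j * x j)\<^sup>2)"
    and "(\<Sum>i\<in>R. (\<Sum>j\<in>T. Phi i j * x j)\<^sup>2) \<le> (1 + d') * (\<Sum>j\<in>T. (x j)\<^sup>2)"
    by linarith+
qed

lemma rip_holds_cong:
  assumes "\<And>i j. i \<in> R \<Longrightarrow> j \<in> C \<Longrightarrow> Phi i j = Psi i j"
  shows "rip_holds R C Phi s d \<longleftrightarrow> rip_holds R C Psi s d"
proof -
  have "(\<Sum>i\<in>R. (\<Sum>j\<in>T. Phi i j * x j)\<^sup>2) = (\<Sum>i\<in>R. (\<Sum>j\<in>T. Psi i j * x j)\<^sup>2)"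
    if "T \<subseteq> C" for T x
    using that assms by (intro sum.cong refl arg_cong[where f = "\<lambda>t. t\<^sup>2"]) auto
  then show ?thesis unfolding rip_holds_def by auto
qed

text \<open>Cauchy-Schwarz bounds every \<open>\<parallel>Phi\<^sub>T x\<parallel>\<^sup>2\<close> by \<open>\<parallel>Phi\<parallel>\<^sub>F\<^sup>2 \<parallel>x\<parallel>\<^sup>2\<close>, so \<open>1 + \<parallel>Phi\<parallel>\<^sub>F\<^sup>2\<close> is admissible.\<close>

lemma rip_holds_exists:
  fixes Phi :: "'r \<Rightarrow> 'c \<Rightarrow> real"
  assumes "finite C"
  shows "\<exists>d\<ge>0. rip_holds R C Phi s d"
proof -
  define F where "F = (\<Sum>i\<in>R. \<Sum>j\<in>C. (Phi i j)\<^sup>2)"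
  have "F \<ge> 0" unfolding F_def by (intro sum_nonneg) simp
  have "rip_holds R C Phi s (1 + F)"
  proof (rule rip_holdsI)
    fix T and x :: "'c \<Rightarrow> real" assume "T \<subseteq> C"
    have norm_nonneg: "(\<Sum>j\<in>T. (x j)\<^sup>2) \<ge> 0" by (simp add: sum_nonneg)
    have "(\<Sum>i\<in>R. (\<Sum>j\<in>T. Phi i j * x j)\<^sup>2) \<ge> 0" by (simp add: sum_nonneg)
    then show "(1 - (1 + F)) * (\<Sum>j\<in>T. (x j)\<^sup>2) \<le> (\<Sum>i\<in>R. (\<Sum>j\<in>T. Phi i j * x j)\<^sup>2)"
      using mult_nonneg_nonneg[OF \<open>F \<ge> 0\<close> norm_nonneg] by simp
    have "(\<Sum>i\<in>R. (\<Sum>j\<in>T. Phi i j * x j)\<^sup>2) \<le> (\<Sum>i\<in>R. (\<Sum>j\<in>C. (Phi i j)\<^sup>2) * (\<Sum>j\<in>T. (x j)\<^sup>2))"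
    proof (rule sum_mono)
      fix i
      have "(\<Sum>j\<in>T. Phi i j * x j)\<^sup>2 \<le> (\<Sum>j\<in>T. (Phi i j)\<^sup>2) * (\<Sum>j\<in>T. (x j)\<^sup>2)"
        by (rule Cauchy_Schwarz_ineq_sum)
      also have "\<dots> \<le> (\<Sum>j\<in>C. (Phi i j)\<^sup>2) * (\<Sum>j\<in>T. (x j)\<^sup>2)"
        using \<open>T \<subseteq> C\<close> assms norm_nonneg by (intro mult_right_mono sum_mono2) auto
      finally show "(\<Sum>j\<in>T. Phi i j * x j)\<^sup>2 \<le> (\<Sum>j\<in>C. (Phi i j)\<^sup>2) * (\<Sum>j\<in>T. (x j)\<^sup>2)" .
    qed
    also have "\<dots> = F * (\<Sum>j\<in>T. (x j)\<^sup>2)"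
      unfolding F_def by (simp add: sum_distrib_right)
    also have "\<dots> \<le> (1 + (1 + F)) * (\<Sum>j\<in>T. (x j)\<^sup>2)"
      using norm_nonneg by (intro mult_right_mono) auto
    finally show "(\<Sum>i\<in>R. (\<Sum>j\<in>T. Phi i j * x j)\<^sup>2) \<le> (1 + (1 + F)) * (\<Sum>j\<in>T. (x j)\<^sup>2)" .
  qed
  then show ?thesis using \<open>F \<ge> 0\<close> by (intro exI[of _ "1 + F"]) auto
qed

subsection \<open>Block diagonal matrices\<close>

lemma sum_partition_inter:
  assumes "finite X" "partition_on X P" "T \<subseteq> X"
  shows "sum f T = (\<Sum>B\<in>P. sum f (T \<inter> B))"
proof -
  have "sum f T = (\<Sum>j\<in>X. if j \<in> T then f j else 0)"
    using assms(1,3) by (simp add: sum.If_cases Int_absorb1)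
  also have "\<dots> = (\<Sum>B\<in>P. \<Sum>j\<in>B. if j \<in> T then f j else 0)"
    using assms(1,2) by (rule sum.partition)
  also have "\<dots> = (\<Sum>B\<in>P. sum f (T \<inter> B))"
  proof (rule sum.cong[OF refl])
    fix B assume "B \<in> P"
    then have "finite B"
      using assms(1,2) partition_onD1 by (metis Union_upper finite_subset)
    then show "(\<Sum>j\<in>B. if j \<in> T then f j else 0) = sum f (T \<inter> B)"
      by (simp add: sum.inter_restrict inf.commute)
  qed
  finally show ?thesis .
qed

definition block_diagonal :: "'a set set \<Rightarrow> ('a \<Rightarrow> 'a \<Rightarrow> real) \<Rightarrow> bool" where
  "block_diagonal P Phi \<longleftrightarrow>
     (\<forall>B\<in>P. \<forall>B'\<in>P. B \<noteq> B' \<longrightarrow> (\<forall>i\<in>B. \<forall>j\<in>B'. Phi i j = 0))"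

lemma block_diagonal_row_sum:
  assumes "finite V" "partition_on V P" "block_diagonal P Phi" "B \<in> P" "i \<in> B" "T \<subseteq> V"
  shows "(\<Sum>j\<in>T. Phi i j * x j) = (\<Sum>j\<in>T \<inter> B. Phi i j * x j)"
proof (rule sum.mono_neutral_right)
  show "finite T" using assms(1,6) by (rule finite_subset[rotated])
  have "Phi i j = 0" if "j \<in> T - B" for j
  proof -
    have "j \<in> \<Union>P" using that assms(6) partition_onD1[OF assms(2)] by blast
    then obtain B' where "B' \<in> P" "j \<in> B'" by blast
    moreover have "B' \<noteq> B" using \<open>j \<in> B'\<close> that by auto
    ultimately show ?thesis
      using assms(3-5) unfolding block_diagonal_def by blast
  qed
  then show "\<forall>j\<in>T - T \<inter> B. Phi i j * x j = 0" by simp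
qed auto

lemma block_diagonal_image_sum:
  assumes "finite V" "partition_on V P" "block_diagonal P Phi" "T \<subseteq> V"
  shows "(\<Sum>i\<in>V. (\<Sum>j\<in>T. Phi i j * x j)\<^sup>2) = (\<Sum>B\<in>P. \<Sum>i\<in>B. (\<Sum>j\<in>T \<inter> B. Phi i j * x j)\<^sup>2)"
proof -
  have "(\<Sum>i\<in>V. (\<Sum>j\<in>T. Phi i j * x j)\<^sup>2) = (\<Sum>B\<in>P. \<Sum>i\<in>B. (\<Sum>j\<in>T. Phi i j * x j)\<^sup>2)"
    using assms(1,2) by (rule sum.partition)
  also have "\<dots> = (\<Sum>B\<in>P. \<Sum>i\<in>B. (\<Sum>j\<in>T \<inter> B. Phi i j * x j)\<^sup>2)"
    using block_diagonal_row_sum[OF assms(1-3) _ _ assms(4)] by simp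
  finally show ?thesis .
qed

lemma rip_holds_block_diagonal:
  assumes "finite V" "partition_on V P" "block_diagonal P Phi"
  shows "rip_holds V V Phi s d \<longleftrightarrow> (\<forall>B\<in>P. rip_holds B B Phi s d)"
proof
  assume rip: "rip_holds V V Phi s d"
  show "\<forall>B\<in>P. rip_holds B B Phi s d"
  proof (intro ballI rip_holdsI)
    fix B T and x :: "'a \<Rightarrow> real"
    assume B: "B \<in> P" and T: "T \<subseteq> B" "card T \<le> s"
    have "B \<subseteq> V" using B partition_onD1[OF assms(2)] by blast
    have other_blocks: "T \<inter> B' = {}" if "B' \<in> P - {B}" for B'
    proof -
      have "disjnt B B'"
        using pairwiseD[OF partition_onD2[OF assms(2)] B] that by blast
      then show ?thesis using T(1) by (auto simp: disjnt_def)
    qed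
    have "(\<Sum>i\<in>V. (\<Sum>j\<in>T. Phi i j * x j)\<^sup>2) = (\<Sum>B'\<in>P. \<Sum>i\<in>B'. (\<Sum>j\<in>T \<inter> B'. Phi i j * x j)\<^sup>2)"
      using T(1) \<open>B \<subseteq> V\<close> by (intro block_diagonal_image_sum[OF assms]) auto
    also have "\<dots> = (\<Sum>i\<in>B. (\<Sum>j\<in>T \<inter> B. Phi i j * x j)\<^sup>2)"
      using finite_elements[OF assms(1,2)] B other_blocks by (simp add: sum.remove)
    also have "\<dots> = (\<Sum>i\<in>B. (\<Sum>j\<in>T. Phi i j * x j)\<^sup>2)"
      using T(1) by (simp add: Int_absorb2)
    finally have image_eq: "(\<Sum>i\<in>V. (\<Sum>j\<in>T. Phi i j * x j)\<^sup>2) = (\<Sum>i\<in>B. (\<Sum>j\<in>T. Phi i j * x j)\<^sup>2)" .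
    have "T \<subseteq> V" using T(1) \<open>B \<subseteq> V\<close> by blast
    show "(1 - d) * (\<Sum>j\<in>T. (x j)\<^sup>2) \<le> (\<Sum>i\<in>B. (\<Sum>j\<in>T. Phi i j * x j)\<^sup>2)"
      using rip_holdsD(1)[OF rip \<open>T \<subseteq> V\<close> T(2), where x = x] unfolding image_eq .
    show "(\<Sum>i\<in>B. (\<Sum>j\<in>T. Phi i j * x j)\<^sup>2) \<le> (1 + d) * (\<Sum>j\<in>T. (x j)\<^sup>2)"
      using rip_holdsD(2)[OF rip \<open>T \<subseteq> V\<close> T(2), where x = x] unfolding image_eq .
  qed
next
  assume rip: "\<forall>B\<in>P. rip_holds B B Phi s d"
  show "rip_holds V V Phi s d"
  proof (rule rip_holdsI)
    fix T and x :: "'a \<Rightarrow> real" assume T: "T \<subseteq> V" "card T \<le> s"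
    have "card (T \<inter> B) \<le> s" for B
      using card_mono[OF finite_subset[OF T(1) assms(1)] Int_lower1, of B] T(2) by linarith
    then have block: "rip_holds B B Phi s d \<and> T \<inter> B \<subseteq> B \<and> card (T \<inter> B) \<le> s" if "B \<in> P" for B
      using rip that by blast
    have norm_eq: "c * (\<Sum>j\<in>T. (x j)\<^sup>2) = (\<Sum>B\<in>P. c * (\<Sum>j\<in>T \<inter> B. (x j)\<^sup>2))" for c
      unfolding sum_partition_inter[OF assms(1,2) T(1)] by (rule sum_distrib_left)
    have image_eq: "(\<Sum>i\<in>V. (\<Sum>j\<in>T. Phi i j * x j)\<^sup>2) =
        (\<Sum>B\<in>P. \<Sum>i\<in>B. (\<Sum>j\<in>T \<inter> B. Phi i j * x j)\<^sup>2)"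
      using block_diagonal_image_sum[OF assms T(1)] .
    show "(1 - d) * (\<Sum>j\<in>T. (x j)\<^sup>2) \<le> (\<Sum>i\<in>V. (\<Sum>j\<in>T. Phi i j * x j)\<^sup>2)"
      unfolding norm_eq image_eq by (rule sum_mono) (use block rip_holdsD(1) in blast)
    show "(\<Sum>i\<in>V. (\<Sum>j\<in>T. Phi i j * x j)\<^sup>2) \<le> (1 + d) * (\<Sum>j\<in>T. (x j)\<^sup>2)"
      unfolding norm_eq image_eq by (rule sum_mono) (use block rip_holdsD(2) in blast)
  qed
qed

lemma rip_const_cong:
  assumes "\<And>i j. i \<in> R \<Longrightarrow> j \<in> C \<Longrightarrow> Phi i j = Psi i j"
  shows "rip_const R C Phi s = rip_const R C Psi s"
proof -
  have "rip_holds R C Phi s d \<longleftrightarrow> rip_holds R C Psi s d" for d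
    using assms by (rule rip_holds_cong)
  then show ?thesis unfolding rip_const_def by simp
qed

lemma rip_const_block_diagonal:
  assumes "finite V" "partition_on V P" "block_diagonal P Phi" "P \<noteq> {}"
  shows "rip_const V V Phi s = Max ((\<lambda>B. rip_const B B Phi s) ` P)"
proof -
  let ?S = "\<lambda>B. {\<delta>. \<delta> \<ge> 0 \<and> rip_holds B B Phi s \<delta>}"
  have "{\<delta>. \<delta> \<ge> 0 \<and> rip_holds V V Phi s \<delta>} = (\<Inter>B\<in>P. ?S B)"
    using rip_holds_block_diagonal[OF assms(1-3)] assms(4) by auto
  moreover have "Inf (\<Inter>B\<in>P. ?S B) = Max ((\<lambda>B. Inf (?S B)) ` P)"
  proof (rule cInf_INTER_up_closed)
    show "finite P" using finite_elements[OF assms(1,2)] .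
    show "?S B \<noteq> {}" if "B \<in> P" for B
    proof -
      have "finite B" using that partition_onD1[OF assms(2)] finite_subset[OF _ assms(1)] by blast
      then show ?thesis using rip_holds_exists by auto
    qed
    show "bdd_below (?S B)" for B by (rule bdd_belowI[of _ 0]) auto
    show "d' \<in> ?S B" if "d \<in> ?S B" "d \<le> d'" for B d d'
      using that rip_holds_mono by fastforce
  qed fact
  ultimately show ?thesis unfolding rip_const_def by simp
qed

subsection \<open>Connected components\<close>

lemma reach_sym:
  assumes "graph V E" "reach V E a b"
  shows "reach V E b a"
proof -
  have "(\<lambda>a b. E a b \<and> a \<in> V \<and> b \<in> V)\<inverse>\<inverse> = (\<lambda>a b. E a b \<and> a \<in> V \<and> b \<in> V)"
    using assms(1) unfolding graph_def by (auto intro!: ext)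
  then show ?thesis
    using rtranclp_converseI[of "\<lambda>a b. E a b \<and> a \<in> V \<and> b \<in> V" a b] assms(2)
    unfolding reach_def by simp
qed

lemma conn_component_eq:
  assumes "graph V E" "C \<in> conn_components V E" "i \<in> C"
  shows "C = {w \<in> V. reach V E i w}"
proof -
  obtain v where "C = {w \<in> V. reach V E v w}"
    using assms(2) unfolding conn_components_def by auto
  moreover have "reach V E v i" "reach V E i v"
    using assms(3) reach_sym[OF assms(1)] calculation by auto
  ultimately show ?thesis
    unfolding reach_def by (auto intro: rtranclp_trans)
qed

lemma partition_on_conn_components:
  assumes "graph V E"
  shows "partition_on V (conn_components V E)"
proof (rule partition_onI)
  show "\<Union>(conn_components V E) = V"
    unfolding conn_components_def reach_def by auto
  show "{} \<notin> conn_components V E"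
    unfolding conn_components_def reach_def by auto
  show "disjnt C C'" if "C \<in> conn_components V E" "C' \<in> conn_components V E" "C \<noteq> C'" for C C'
    using conn_component_eq[OF assms that(1)] conn_component_eq[OF assms that(2)] that(3)
    unfolding disjnt_def by blast
qed

lemma conn_component_edge:
  assumes "graph V E" "C \<in> conn_components V E" "i \<in> C" "E i j"
  shows "j \<in> C"
proof -
  have "j \<in> V" and "i \<in> V"
    using assms(1,4) unfolding graph_def by auto
  then have "reach V E i j"
    unfolding reach_def using assms(4) by auto
  then show ?thesis
    using conn_component_eq[OF assms(1-3)] \<open>j \<in> V\<close> by auto
qed

lemma degree_conn_component:
  assumes "graph V E" "C \<in> conn_components V E" "i \<in> C"
  shows "degree V E i = degree C E i"
proof -
  have "C \<subseteq> V" using assms(2) unfolding conn_components_def by auto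
  then have "{w \<in> V. E i w} = {w \<in> C. E i w}"
    using conn_component_edge[OF assms] by auto
  then show ?thesis unfolding degree_def by simp
qed

lemma rw_laplacian_conn_component:
  assumes "graph V E" "C \<in> conn_components V E" "i \<in> C"
  shows "rw_laplacian V E i j = rw_laplacian C E i j"
  unfolding rw_laplacian_def degree_conn_component[OF assms] ..

lemma block_diagonal_rw_laplacian:
  assumes "graph V E"
  shows "block_diagonal (conn_components V E) (rw_laplacian V E)"
  unfolding block_diagonal_def
proof (intro ballI impI)
  fix C C' i j
  assume C: "C \<in> conn_components V E" and "C' \<in> conn_components V E" "C \<noteq> C'"
    and "i \<in> C" "j \<in> C'"
  then have "C \<inter> C' = {}"
    using partition_onD2[OF partition_on_conn_components[OF assms]]
    by (auto simp: pairwise_def disjnt_def)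
  then have "i \<noteq> j" and "\<not> E i j"
    using conn_component_edge[OF assms C \<open>i \<in> C\<close>] \<open>i \<in> C\<close> \<open>j \<in> C'\<close> by auto
  then show "rw_laplacian V E i j = 0"
    unfolding rw_laplacian_def adj_def by simp
qed

theorem mainTheorem8:
  fixes V :: "'v set" and E :: "'v \<Rightarrow> 'v \<Rightarrow> bool" and k n0 s :: nat
  assumes "graph V E"
    and "card (conn_components V E) = k" and "k \<ge> 1"
    and "\<forall>C\<in>conn_components V E. card C = n0"
    and "s < n0"
  shows "rip_const V V (rw_laplacian V E) s
           = Max ((\<lambda>C. rip_const C C (rw_laplacian C E) s) ` conn_components V E)"
proof -
  have "finite V" using assms(1) unfolding graph_def by simp
  have "conn_components V E \<noteq> {}" using assms(2,3) by auto
  have "rip_const V V (rw_laplacian V E) s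
      = Max ((\<lambda>C. rip_const C C (rw_laplacian V E) s) ` conn_components V E)"
    by (rule rip_const_block_diagonal[OF \<open>finite V\<close> partition_on_conn_components[OF assms(1)]
          block_diagonal_rw_laplacian[OF assms(1)] \<open>conn_components V E \<noteq> {}\<close>])
  also have "\<dots> = Max ((\<lambda>C. rip_const C C (rw_laplacian C E) s) ` conn_components V E)"
  proof (intro arg_cong[where f = Max] image_cong[OF refl])
    fix C assume "C \<in> conn_components V E"
    from rw_laplacian_conn_component[OF assms(1) this]
    show "rip_const C C (rw_laplacian V E) s = rip_const C C (rw_laplacian C E) s"
      by (intro rip_const_cong) blast
  qed
  finally show ?thesis .
qed

end
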